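(* Let $(K,*,\circ)$ be a left skew brace and let $G\subseteq K$ be a sub-skew brace (a subset which is a subgroup of both $(K,* )$ and $(K,\circ)$), with inclusion $i\colon G\to K$. Then $i$ is a normal subobject in the category $\mathsf{SKB}$ of left skew braces if and only if the following three conditions hold: (1) $G$ is a normal subgroup of $(K,* )$; (2) $G$ is a normal subgroup of $(K,\circ)$; (3') $\lambda_x(G)=G$ for all $x\in K$.
   Context: A (left) skew brace is a triple $(A,*,\circ)$ with $(A,* )$ and $(A,\circ)$ groups such that $a\circ(b*c)=(a\circ b)*a^{-*}*(a\circ c)$ for all $a,b,c\in A$; here $a^{-*}$ and $a^{-\circ}$ denote inverses in $(A,* )$ and $(A,\circ)$. The two groups have the same identity $1$. Morphisms in $\mathsf{SKB}$ are maps that are homomorphisms for both operations. For $a,u\in A$ put $\lambda_a(u)=a^{-*}*(a\circ u)$. A congruence on $K$ is an equivalence relation $R\subseteq K\times K$ that is a sub-skew brace of the product skew brace $K\times K$ (componentwise operations). A sub-skew brace $G\subseteq K$ is called normal (normal subobject in $\mathsf{SKB}$) if there is a congruence $R$ on $K$ such that $G$ is exactly the $R$-equivalence class of $1$ (equivalently, in categorical terms, the inclusion is normal to some internal equivalence relation $R$: the restriction of $R$ to $G$ is $G\times G$ and whenever $g\in G$ and $(g,y)\in R$ then $y\in G$). *)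

theory Defs
  imports "HOL-Algebra.Algebra"
begin

definition skew_brace :: "('a, 'm) monoid_scheme \<Rightarrow> ('a, 'n) monoid_scheme \<Rightarrow> bool" where
  "skew_brace A B \<longleftrightarrow> group A \<and> group B \<and> carrier A = carrier B \<and>
     (\<forall>a\<in>carrier A. \<forall>b\<in>carrier A. \<forall>c\<in>carrier A.
        a \<otimes>\<^bsub>B\<^esub> (b \<otimes>\<^bsub>A\<^esub> c)
        = (a \<otimes>\<^bsub>B\<^esub> b) \<otimes>\<^bsub>A\<^esub> inv\<^bsub>A\<^esub> a \<otimes>\<^bsub>A\<^esub> (a \<otimes>\<^bsub>B\<^esub> c))"

definition sub_skew_brace :: "'a set \<Rightarrow> ('a, 'm) monoid_scheme \<Rightarrow> ('a, 'n) monoid_scheme \<Rightarrow> bool" where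
  "sub_skew_brace G A B \<longleftrightarrow> subgroup G A \<and> subgroup G B"

definition skb_lambda :: "('a, 'm) monoid_scheme \<Rightarrow> ('a, 'n) monoid_scheme \<Rightarrow> 'a \<Rightarrow> 'a \<Rightarrow> 'a" where
  "skb_lambda A B a u = inv\<^bsub>A\<^esub> a \<otimes>\<^bsub>A\<^esub> (a \<otimes>\<^bsub>B\<^esub> u)"

definition skb_congruence :: "('a \<times> 'a) set \<Rightarrow> ('a, 'm) monoid_scheme \<Rightarrow> ('a, 'n) monoid_scheme \<Rightarrow> bool" where
  "skb_congruence R A B \<longleftrightarrow> equiv (carrier A) R \<and> sub_skew_brace R (A \<times>\<times> A) (B \<times>\<times> B)"

text \<open>Normal sub-skew brace (normal subobject in SKB): G is the class of 1 for some congruence.\<close>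
definition normal_sub_skew_brace :: "'a set \<Rightarrow> ('a, 'm) monoid_scheme \<Rightarrow> ('a, 'n) monoid_scheme \<Rightarrow> bool" where
  "normal_sub_skew_brace G A B \<longleftrightarrow>
     (\<exists>R. skb_congruence R A B \<and> G = {y. (\<one>\<^bsub>A\<^esub>, y) \<in> R})"

end

theory Submission
  imports Defs
begin

text \<open>The brace law enters only through the fact that both group structures share
  their identity. Each \<open>\<lambda>\<^sub>x\<close> is injective and sends \<open>x\<^sup>-\<^sup>\<circ> \<circ> y\<close> to
  \<open>x\<^sup>-\<^sup>* * y\<close>, so a \<open>\<lambda>\<close>-invariant G defines the same relation "\<open>x\<^sup>-\<^sup>1 y \<in> G\<close>"
  in both groups; if G is normal in both, this relation is a congruence whose class of
  \<open>1\<close> is G. Conversely, the class of \<open>1\<close> of a congruence is normal in each group,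
  and it is \<open>\<lambda>\<close>-invariant: for g in it, \<open>\<lambda>\<^sub>x(g)\<close> and \<open>x\<^sup>-\<^sup>\<circ> \<circ> (x * g)\<close> are
  congruent to \<open>\<lambda>\<^sub>x(1) = 1\<close> and \<open>x\<^sup>-\<^sup>\<circ> \<circ> x = 1\<close>, and \<open>\<lambda>\<^sub>x\<close> maps the latter to g.\<close>

lemma (in group) DirProd_subgroup_inv_pair:
  assumes "subgroup R (G \<times>\<times> G)" and "(a, b) \<in> R"
  shows "(inv a, inv b) \<in> R"
proof -
  have "a \<in> carrier G" "b \<in> carrier G"
    using subgroup.subset[OF assms(1)] assms(2) by auto
  then show ?thesis
    using subgroup.m_inv_closed[OF assms] by (simp add: inv_DirProd[OF group_axioms group_axioms])
qed

lemma (in group) class_of_one_normal: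
  assumes R: "subgroup R (G \<times>\<times> G)" and diag: "\<And>x. x \<in> carrier G \<Longrightarrow> (x, x) \<in> R"
  shows "{y. (\<one>, y) \<in> R} \<lhd> G"
  unfolding normal_inv_iff
proof (intro conjI ballI subgroupI)
  show "{y. (\<one>, y) \<in> R} \<subseteq> carrier G"
    using subgroup.subset[OF R] by auto
  show "{y. (\<one>, y) \<in> R} \<noteq> {}"
    using diag[OF one_closed] by blast
next
  fix a assume "a \<in> {y. (\<one>, y) \<in> R}"
  then show "inv a \<in> {y. (\<one>, y) \<in> R}"
    using DirProd_subgroup_inv_pair[OF R] by fastforce
next
  fix a b assume "a \<in> {y. (\<one>, y) \<in> R}" "b \<in> {y. (\<one>, y) \<in> R}"
  then show "a \<otimes> b \<in> {y. (\<one>, y) \<in> R}"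
    using subgroup.m_closed[OF R, of "(\<one>, a)" "(\<one>, b)"] by simp
next
  fix x g assume x: "x \<in> carrier G" and g: "g \<in> {y. (\<one>, y) \<in> R}"
  have "(x, x) \<otimes>\<^bsub>G \<times>\<times> G\<^esub> (\<one>, g) \<otimes>\<^bsub>G \<times>\<times> G\<^esub> (inv x, inv x) \<in> R"
    using g by (intro subgroup.m_closed[OF R] diag x DirProd_subgroup_inv_pair[OF R]) auto
  moreover have "g \<in> carrier G"
    using g subgroup.subset[OF R] by auto
  ultimately show "x \<otimes> g \<otimes> inv x \<in> {y. (\<one>, y) \<in> R}"
    using x by simp
qed

lemma (in normal) subgroup_rcong_DirProd: "subgroup (rcong H) (G \<times>\<times> G)"
proof (rule group.subgroupI[OF DirProd_group[OF is_group is_group]])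
  show "rcong H \<subseteq> carrier (G \<times>\<times> G)"
    by (auto simp: r_congruent_def)
  show "rcong H \<noteq> {}"
    using equiv_rcong[OF is_group] by (auto simp: equiv_def refl_on_def)
next
  fix p assume "p \<in> rcong H"
  then obtain a b where p: "p = (a, b)" and ab: "a \<in> carrier G" "b \<in> carrier G" "inv a \<otimes> b \<in> H"
    by (auto simp: r_congruent_def)
  have "inv (inv a) \<otimes> inv b = a \<otimes> inv (inv a \<otimes> b) \<otimes> inv a"
    using ab by (simp add: inv_mult_group m_assoc)
  moreover have "a \<otimes> inv (inv a \<otimes> b) \<otimes> inv a \<in> H"
    using inv_op_closed2 ab by blast
  ultimately show "inv\<^bsub>G \<times>\<times> G\<^esub> p \<in> rcong H"
    using ab by (simp add: p r_congruent_def inv_DirProd[OF is_group is_group])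
next
  fix p q assume "p \<in> rcong H" "q \<in> rcong H"
  then obtain a b c d where pq: "p = (a, b)" "q = (c, d)"
    and ab: "a \<in> carrier G" "b \<in> carrier G" "inv a \<otimes> b \<in> H"
    and cd: "c \<in> carrier G" "d \<in> carrier G" "inv c \<otimes> d \<in> H"
    by (auto simp: r_congruent_def)
  have "inv (a \<otimes> c) \<otimes> (b \<otimes> d) = (inv c \<otimes> (inv a \<otimes> b) \<otimes> c) \<otimes> (inv c \<otimes> d)"
    using ab cd by (simp add: inv_mult_group m_assoc) (simp add: m_assoc[symmetric])
  moreover have "inv c \<otimes> (inv a \<otimes> b) \<otimes> c \<in> H"
    using inv_op_closed1 ab cd by blast
  ultimately show "p \<otimes>\<^bsub>G \<times>\<times> G\<^esub> q \<in> rcong H"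
    using ab cd by (simp add: pq r_congruent_def)
qed

lemma (in subgroup) rcong_class_of_one:
  assumes "group G"
  shows "{y. (\<one>, y) \<in> rcong H} = H"
proof -
  interpret group G by fact
  show ?thesis
    using subset by (auto simp: r_congruent_def)
qed

lemma skew_brace_mult_one:
  assumes "skew_brace A B" and a: "a \<in> carrier A"
  shows "a \<otimes>\<^bsub>B\<^esub> \<one>\<^bsub>A\<^esub> = a"
proof -
  interpret A: group A using assms(1) by (simp add: skew_brace_def)
  interpret B: group B using assms(1) by (simp add: skew_brace_def)
  have cB: "carrier B = carrier A"
    and law: "\<And>a b c. a \<in> carrier A \<Longrightarrow> b \<in> carrier A \<Longrightarrow> c \<in> carrier A \<Longrightarrow>
      a \<otimes>\<^bsub>B\<^esub> (b \<otimes>\<^bsub>A\<^esub> c) = (a \<otimes>\<^bsub>B\<^esub> b) \<otimes>\<^bsub>A\<^esub> inv\<^bsub>A\<^esub> a \<otimes>\<^bsub>A\<^esub> (a \<otimes>\<^bsub>B\<^esub> c)"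
    using assms(1) by (auto simp: skew_brace_def)
  define e where "e = a \<otimes>\<^bsub>B\<^esub> \<one>\<^bsub>A\<^esub>"
  have e: "e \<in> carrier A"
    using B.m_closed[of a "\<one>\<^bsub>A\<^esub>"] a cB by (simp add: e_def)
  have "e = e \<otimes>\<^bsub>A\<^esub> (inv\<^bsub>A\<^esub> a \<otimes>\<^bsub>A\<^esub> e)"
    using law[OF a A.one_closed A.one_closed] a e by (simp add: e_def A.m_assoc)
  then have "inv\<^bsub>A\<^esub> a \<otimes>\<^bsub>A\<^esub> e = \<one>\<^bsub>A\<^esub>"
    using a e by simp
  then show ?thesis
    using a e by (metis A.inv_equality A.inv_inv A.inv_closed e_def)
qed

locale group_pair = A: group A + B: group B
  for A :: "('a, 'm) monoid_scheme" and B :: "('a, 'n) monoid_scheme" +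
  assumes carrier_eq: "carrier B = carrier A"
    and one_eq: "\<one>\<^bsub>B\<^esub> = \<one>\<^bsub>A\<^esub>"

lemma skew_brace_group_pair:
  assumes "skew_brace A B"
  shows "group_pair A B"
proof -
  interpret A: group A using assms by (simp add: skew_brace_def)
  interpret B: group B using assms by (simp add: skew_brace_def)
  have cB: "carrier B = carrier A"
    using assms by (simp add: skew_brace_def)
  have "\<one>\<^bsub>B\<^esub> = \<one>\<^bsub>B\<^esub> \<otimes>\<^bsub>B\<^esub> \<one>\<^bsub>A\<^esub>"
    using skew_brace_mult_one[OF assms B.one_closed[unfolded cB]] by simp
  also have "\<dots> = \<one>\<^bsub>A\<^esub>"
    using B.l_one[of "\<one>\<^bsub>A\<^esub>"] A.one_closed cB by simp
  finally show ?thesis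
    using cB by unfold_locales
qed

context group_pair
begin

declare carrier_eq [simp]

lemma B_closed [simp]:
  "x \<in> carrier A \<Longrightarrow> y \<in> carrier A \<Longrightarrow> x \<otimes>\<^bsub>B\<^esub> y \<in> carrier A"
  "x \<in> carrier A \<Longrightarrow> inv\<^bsub>B\<^esub> x \<in> carrier A"
  by (metis B.m_closed carrier_eq, metis B.inv_closed carrier_eq)

lemma lambda_inv_mult:
  assumes "x \<in> carrier A" "y \<in> carrier A"
  shows "skb_lambda A B x (inv\<^bsub>B\<^esub> x \<otimes>\<^bsub>B\<^esub> y) = inv\<^bsub>A\<^esub> x \<otimes>\<^bsub>A\<^esub> y"
  using assms by (simp add: skb_lambda_def B.m_assoc[symmetric])

lemma inj_on_lambda:
  assumes "x \<in> carrier A"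
  shows "inj_on (skb_lambda A B x) (carrier A)"
  using assms by (intro inj_onI) (simp add: skb_lambda_def)

lemma rcong_eq_if_lambda_invariant:
  assumes "N \<subseteq> carrier A" and lambda_N: "\<And>x. x \<in> carrier A \<Longrightarrow> skb_lambda A B x ` N = N"
  shows "rcong\<^bsub>A\<^esub> N = rcong\<^bsub>B\<^esub> N"
proof -
  have "inv\<^bsub>A\<^esub> x \<otimes>\<^bsub>A\<^esub> y \<in> N \<longleftrightarrow> inv\<^bsub>B\<^esub> x \<otimes>\<^bsub>B\<^esub> y \<in> N"
    if "x \<in> carrier A" "y \<in> carrier A" for x y
  proof -
    have "inv\<^bsub>B\<^esub> x \<otimes>\<^bsub>B\<^esub> y \<in> carrier A"
      using that by simp
    then have "skb_lambda A B x (inv\<^bsub>B\<^esub> x \<otimes>\<^bsub>B\<^esub> y) \<in> skb_lambda A B x ` N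
        \<longleftrightarrow> inv\<^bsub>B\<^esub> x \<otimes>\<^bsub>B\<^esub> y \<in> N"
      using inj_on_image_mem_iff[OF inj_on_lambda] that assms(1) by blast
    then show ?thesis
      using that lambda_N by (simp add: lambda_inv_mult)
  qed
  then show ?thesis
    by (auto simp: r_congruent_def)
qed

lemma lambda_invariant_class_of_one:
  assumes RA: "subgroup R (A \<times>\<times> A)" and RB: "subgroup R (B \<times>\<times> B)"
    and diag: "\<And>x. x \<in> carrier A \<Longrightarrow> (x, x) \<in> R" and x: "x \<in> carrier A"
  shows "skb_lambda A B x ` {y. (\<one>\<^bsub>A\<^esub>, y) \<in> R} = {y. (\<one>\<^bsub>A\<^esub>, y) \<in> R}"
    (is "_ ` ?N = ?N")
proof -
  have inv_x: "(inv\<^bsub>A\<^esub> x, inv\<^bsub>A\<^esub> x) \<in> R" "(inv\<^bsub>B\<^esub> x, inv\<^bsub>B\<^esub> x) \<in> R"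
    using x diag
    by (auto intro: A.DirProd_subgroup_inv_pair[OF RA] B.DirProd_subgroup_inv_pair[OF RB])
  have gA: "g \<in> carrier A" if "g \<in> ?N" for g
    using that subgroup.subset[OF RA] by auto
  show ?thesis
  proof
    show "skb_lambda A B x ` ?N \<subseteq> ?N"
    proof (rule image_subsetI)
      fix g assume g: "g \<in> ?N"
      have "(inv\<^bsub>A\<^esub> x, inv\<^bsub>A\<^esub> x) \<otimes>\<^bsub>A \<times>\<times> A\<^esub> ((x, x) \<otimes>\<^bsub>B \<times>\<times> B\<^esub> (\<one>\<^bsub>A\<^esub>, g)) \<in> R"
        using g x inv_x diag by (intro subgroup.m_closed[OF RA] subgroup.m_closed[OF RB]) auto
      then show "skb_lambda A B x g \<in> ?N"
        using x gA[OF g] by (simp add: skb_lambda_def flip: one_eq)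
    qed
    show "?N \<subseteq> skb_lambda A B x ` ?N"
    proof
      fix g assume g: "g \<in> ?N"
      define h where "h = inv\<^bsub>B\<^esub> x \<otimes>\<^bsub>B\<^esub> (x \<otimes>\<^bsub>A\<^esub> g)"
      have "(inv\<^bsub>B\<^esub> x, inv\<^bsub>B\<^esub> x) \<otimes>\<^bsub>B \<times>\<times> B\<^esub> ((x, x) \<otimes>\<^bsub>A \<times>\<times> A\<^esub> (\<one>\<^bsub>A\<^esub>, g)) \<in> R"
        using g x inv_x diag by (intro subgroup.m_closed[OF RA] subgroup.m_closed[OF RB]) auto
      then have "h \<in> ?N"
        using x gA[OF g] by (simp add: h_def one_eq)
      moreover have "skb_lambda A B x h = g"
        using x gA[OF g] by (simp add: h_def lambda_inv_mult A.m_assoc[symmetric])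
      ultimately show "g \<in> skb_lambda A B x ` ?N"
        by (metis image_eqI)
    qed
  qed
qed

end

theorem proposition2p4:
  fixes A :: "('a, 'm) monoid_scheme" and B :: "('a, 'n) monoid_scheme" and G :: "'a set"
  assumes "skew_brace A B"
    and "sub_skew_brace G A B"
  shows "normal_sub_skew_brace G A B \<longleftrightarrow>
           (G \<lhd> A \<and> G \<lhd> B \<and> (\<forall>x\<in>carrier A. skb_lambda A B x ` G = G))"
proof -
  interpret group_pair A B
    using assms(1) by (rule skew_brace_group_pair)
  have GA: "subgroup G A"
    using assms(2) by (simp add: sub_skew_brace_def)
  show ?thesis
  proof
    assume "normal_sub_skew_brace G A B"
    then obtain R where "equiv (carrier A) R" and RA: "subgroup R (A \<times>\<times> A)"
      and RB: "subgroup R (B \<times>\<times> B)" and G: "G = {y. (\<one>\<^bsub>A\<^esub>, y) \<in> R}"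
      by (auto simp: normal_sub_skew_brace_def skb_congruence_def sub_skew_brace_def)
    then have diag: "\<And>x. x \<in> carrier A \<Longrightarrow> (x, x) \<in> R"
      by (simp add: equiv_def refl_on_def)
    show "G \<lhd> A \<and> G \<lhd> B \<and> (\<forall>x\<in>carrier A. skb_lambda A B x ` G = G)"
      using A.class_of_one_normal[OF RA diag] B.class_of_one_normal[OF RB]
        lambda_invariant_class_of_one[OF RA RB diag] diag
      by (simp add: G one_eq)
  next
    assume "G \<lhd> A \<and> G \<lhd> B \<and> (\<forall>x\<in>carrier A. skb_lambda A B x ` G = G)"
    then have "G \<lhd> A" "G \<lhd> B" "rcong\<^bsub>A\<^esub> G = rcong\<^bsub>B\<^esub> G"
      using rcong_eq_if_lambda_invariant subgroup.subset[OF GA] by auto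
    then have "skb_congruence (rcong\<^bsub>A\<^esub> G) A B"
      using subgroup.equiv_rcong[OF GA A.is_group] normal.subgroup_rcong_DirProd
      unfolding skb_congruence_def sub_skew_brace_def by metis
    then show "normal_sub_skew_brace G A B"
      unfolding normal_sub_skew_brace_def
      using subgroup.rcong_class_of_one[OF GA A.is_group] by blast
  qed
qed

end
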